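(* Let $G$ be a finite abelian group, $K_1,K_2,K_3\leq G$ cyclic subgroups with $K_i\cap K_j=\{1\}$ for $i\neq j$, and for $i=1,2,3$ let $\psi_i:G\to\mathrm{Aut}(C_i)$ be an action of $G$ on a smooth projective curve $C_i$ of genus $\geq 2$ with $\ker\psi_i=K_i$ and $g(C_i/G)=1$, such that the diagonal action of $G$ on $C_1\times C_2\times C_3$ is free (i.e. $\Sigma_1\cap\Sigma_2\cap\Sigma_3=\{1\}$). For each $i$ fix a non-trivial element $\tilde\sigma_i\in G/K_i$ having a fixed point on $C_i$. Let $I(\tilde\sigma_1,\tilde\sigma_2,\tilde\sigma_3)=\{\chi_1\otimes\chi_2\otimes\chi_3\in I:\chi_i(\tilde\sigma_i)\neq1\text{ for } i=1,2,3\}$, let $G(\tilde\sigma_1,\tilde\sigma_2,\tilde\sigma_3)=\bigcap_{\psi\in I(\tilde\sigma_1,\tilde\sigma_2,\tilde\sigma_3)}\ker(\psi)\leq G\times G\times G$, and $\tilde G(\tilde\sigma_1,\tilde\sigma_2,\tilde\sigma_3)=G(\tilde\sigma_1,\tilde\sigma_2,\tilde\sigma_3)/K\Delta_G$, where $K=K_1\times K_2\times K_3$ and $\Delta_G$ is the diagonal of $G^3$. Then $\tilde G(\tilde\sigma_1,\tilde\sigma_2,\tilde\sigma_3)$ is either trivial or an elementary abelian $2$-group.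
   Context: $G^*$ denotes the group of characters (homomorphisms $G\to\mathbb{C}^*$). A character $\chi$ with $K_i\subseteq\ker\chi$ is viewed also as a character of $G/K_i$. $\Sigma_i=\{g\in G: g \text{ has a fixed point on } C_i\}$ (the union of the stabilizers of the $G$-action on $C_i$). A character $\chi\in G^*$ is pre-admissible for $i$ if $K_i\subseteq\ker\chi$ and $\chi(\sigma)\neq1$ for some $\sigma\in\Sigma_i$. For $\psi=\chi_1\otimes\chi_2\otimes\chi_3$ with $\chi_i\in G^*$, $\psi(\tau_1,\tau_2,\tau_3)=\chi_1(\tau_1)\chi_2(\tau_2)\chi_3(\tau_3)$ on $G^3$. $I_1$ is the set of $\chi_1\otimes\chi_2\otimes\chi_3$ with each $\chi_i$ pre-admissible for $i$ and $\chi_3=\overline{\chi_1\chi_2}$ (admissible of first kind); $I_2$ is the set of $\chi_1\otimes\chi_2\otimes\chi_3$ with exactly one $\chi_i$ trivial and the other two pre-admissible for their respective indices and complex conjugate to each other (admissible of second kind); $I=I_1\cup I_2$. An elementary abelian $2$-group is a group isomorphic to $(\mathbb{Z}/2\mathbb{Z})^k$. *)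

theory Defs
  imports "HOL-Algebra.Algebra" "HOL-Analysis.Analysis"
begin

definition character :: "('a, 'b) monoid_scheme \<Rightarrow> ('a \<Rightarrow> complex) \<Rightarrow> bool" where
  "character G chi \<longleftrightarrow> (\<forall>x\<in>carrier G. chi x \<noteq> 0) \<and>
     (\<forall>x\<in>carrier G. \<forall>y\<in>carrier G. chi (x \<otimes>\<^bsub>G\<^esub> y) = chi x * chi y)"

definition trivial_char :: "('a, 'b) monoid_scheme \<Rightarrow> ('a \<Rightarrow> complex) \<Rightarrow> bool" where
  "trivial_char G chi \<longleftrightarrow> character G chi \<and> (\<forall>x\<in>carrier G. chi x = 1)"

definition pre_admissible ::
  "('a, 'b) monoid_scheme \<Rightarrow> 'a set \<Rightarrow> 'a set \<Rightarrow> ('a \<Rightarrow> complex) \<Rightarrow> bool" where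
  "pre_admissible G K Sig chi \<longleftrightarrow> character G chi \<and> (\<forall>k\<in>K. chi k = 1) \<and> (\<exists>s\<in>Sig. chi s \<noteq> 1)"

definition admissible1 where
  "admissible1 G K1 K2 K3 S1 S2 S3 chi1 chi2 chi3 \<longleftrightarrow>
     pre_admissible G K1 S1 chi1 \<and> pre_admissible G K2 S2 chi2 \<and> pre_admissible G K3 S3 chi3 \<and>
     (\<forall>x\<in>carrier G. chi3 x = cnj (chi1 x * chi2 x))"

definition admissible2 where
  "admissible2 G K1 K2 K3 S1 S2 S3 chi1 chi2 chi3 \<longleftrightarrow>
     (trivial_char G chi1 \<and> pre_admissible G K2 S2 chi2 \<and> pre_admissible G K3 S3 chi3 \<and>
        (\<forall>x\<in>carrier G. chi3 x = cnj (chi2 x))) \<or>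
     (trivial_char G chi2 \<and> pre_admissible G K1 S1 chi1 \<and> pre_admissible G K3 S3 chi3 \<and>
        (\<forall>x\<in>carrier G. chi3 x = cnj (chi1 x))) \<or>
     (trivial_char G chi3 \<and> pre_admissible G K1 S1 chi1 \<and> pre_admissible G K2 S2 chi2 \<and>
        (\<forall>x\<in>carrier G. chi2 x = cnj (chi1 x)))"

definition admissible where
  "admissible G K1 K2 K3 S1 S2 S3 chi1 chi2 chi3 \<longleftrightarrow>
     admissible1 G K1 K2 K3 S1 S2 S3 chi1 chi2 chi3 \<or> admissible2 G K1 K2 K3 S1 S2 S3 chi1 chi2 chi3"

text \<open>Value of a character (trivial on K_i) at an element of G/K_i, given as a coset:
  "chi(sigma) \<noteq> 1" means the character is \<noteq> 1 at (any, equivalently every) representative.\<close>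
definition char_ne_one_at :: "('a \<Rightarrow> complex) \<Rightarrow> 'a set \<Rightarrow> bool" where
  "char_ne_one_at chi \<sigma> \<longleftrightarrow> (\<forall>x\<in>\<sigma>. chi x \<noteq> 1)"

definition G_sigma where
  "G_sigma G K1 K2 K3 S1 S2 S3 \<sigma>1 \<sigma>2 \<sigma>3 =
     {\<tau> \<in> carrier (G \<times>\<times> G \<times>\<times> G). \<forall>chi1 chi2 chi3.
        admissible G K1 K2 K3 S1 S2 S3 chi1 chi2 chi3 \<and>
        char_ne_one_at chi1 \<sigma>1 \<and> char_ne_one_at chi2 \<sigma>2 \<and> char_ne_one_at chi3 \<sigma>3 \<longrightarrow>
        chi1 (fst \<tau>) * chi2 (fst (snd \<tau>)) * chi3 (snd (snd \<tau>)) = 1}"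

definition K_Delta where
  "K_Delta G K1 K2 K3 =
     {(k1 \<otimes>\<^bsub>G\<^esub> g, k2 \<otimes>\<^bsub>G\<^esub> g, k3 \<otimes>\<^bsub>G\<^esub> g) | k1 k2 k3 g.
        k1 \<in> K1 \<and> k2 \<in> K2 \<and> k3 \<in> K3 \<and> g \<in> carrier G}"

definition elementary_abelian_2_group :: "('a, 'b) monoid_scheme \<Rightarrow> bool" where
  "elementary_abelian_2_group H \<longleftrightarrow>
     (\<exists>k::nat. H \<cong> product_group {..<k} (\<lambda>_. integer_mod_group 2))"

text \<open>Curve data (via Riemann's existence theorem): G acts on a smooth projective curve C of
  genus g(C) \<ge> 2 with kernel K, g(C/G) = 1, and Sig is the union of the stabilizers.
  For the abelian group H = G/K acting faithfully this amounts to a generating vector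
  (a, b; c_1, ..., c_r) of type (1; ord c_1, ..., ord c_r): the c_j are nontrivial,
  [a,b] c_1 ... c_r = 1 (here [a,b] = 1 since H is abelian), the elements generate H,
  Riemann-Hurwitz gives 2 g(C) - 2 = |H| * sum (1 - 1/ord c_j), and the stabilizers in H
  are the (conjugates of the) cyclic groups <c_j>; Sig is their preimage in G.\<close>
definition curve_action_data ::
  "('a, 'b) monoid_scheme \<Rightarrow> 'a set \<Rightarrow> 'a set \<Rightarrow> bool" where
  "curve_action_data G K Sig \<longleftrightarrow>
     (\<exists>a b cs gC. a \<in> carrier (G Mod K) \<and> b \<in> carrier (G Mod K) \<and>
        set cs \<subseteq> carrier (G Mod K) \<and> (\<forall>c\<in>set cs. c \<noteq> \<one>\<^bsub>G Mod K\<^esub>) \<and>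
        a \<otimes>\<^bsub>G Mod K\<^esub> b \<otimes>\<^bsub>G Mod K\<^esub> inv\<^bsub>G Mod K\<^esub> a \<otimes>\<^bsub>G Mod K\<^esub> inv\<^bsub>G Mod K\<^esub> b
          \<otimes>\<^bsub>G Mod K\<^esub> foldr (\<otimes>\<^bsub>G Mod K\<^esub>) cs \<one>\<^bsub>G Mod K\<^esub> = \<one>\<^bsub>G Mod K\<^esub> \<and>
        generate (G Mod K) ({a, b} \<union> set cs) = carrier (G Mod K) \<and>
        2 * real gC - 2 = real (card (carrier (G Mod K))) *
            (\<Sum>c\<leftarrow>cs. 1 - 1 / real (group.ord (G Mod K) c)) \<and>
        gC \<ge> 2 \<and>
        Sig = {g \<in> carrier G. \<exists>c\<in>set cs. K #>\<^bsub>G\<^esub> g \<in> generate (G Mod K) {c}})"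

end

theory Submission
  imports Defs
begin

text \<open>
  Every admissible character is trivial on \<open>K \<Delta>\<^sub>G\<close>, so \<open>K \<Delta>\<^sub>G \<subseteq> G(\<sigma>)\<close> and the quotient
  is a finite abelian group. It is elementary abelian as soon as \<open>\<tau>\<^sup>2 \<in> K \<Delta>\<^sub>G\<close> for all
  \<open>\<tau> \<in> G(\<sigma>)\<close>, because a finite abelian group of exponent 2 is a product of copies of
  \<open>\<int>/2\<close> (a smallest set whose subset products exhaust the group is a basis).

  Choose representatives \<open>s\<^sub>i \<in> \<Sigma>\<^sub>i\<close> of the \<open>\<sigma>\<^sub>i\<close> and let \<open>a\<^sub>i\<close> be \<open>s\<^sub>i\<close> placed in the
  \<open>i\<close>-th factor of \<open>G\<^sup>3\<close>. Freeness of the diagonal action makes the \<open>a\<^sub>i\<close> independent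
  modulo \<open>D = K \<Delta>\<^sub>G\<close>: if \<open>a\<^sub>1\<^sup>p a\<^sub>2\<^sup>q a\<^sub>3\<^sup>r = (k\<^sub>1 g, k\<^sub>2 g, k\<^sub>3 g)\<close>, then \<open>g\<close> lies in
  \<open>\<Sigma>\<^sub>1 \<inter> \<Sigma>\<^sub>2 \<inter> \<Sigma>\<^sub>3 = {1}\<close>. If \<open>\<tau>\<^sup>2 \<notin> D\<close>, extending characters one generator at a
  time yields a character \<open>\<chi>\<close> of \<open>G\<^sup>3\<close>, trivial on \<open>D\<close>, with \<open>\<chi>(a\<^sub>i) \<noteq> 1\<close> and
  \<open>\<chi>(\<tau>) \<noteq> 1\<close>: if \<open>\<tau>\<close> lies outside \<open>D\<langle>a\<^sub>1, a\<^sub>2, a\<^sub>3\<rangle>\<close> it is adjoined as a fourth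
  generator; otherwise \<open>\<tau> = d a\<^sub>1\<^sup>p a\<^sub>2\<^sup>q a\<^sub>3\<^sup>r\<close> with, say, \<open>a\<^sub>3\<^sup>2\<^sup>r \<notin> D\<close>, and of the two
  values \<open>\<zeta>\<close>, \<open>\<zeta>\<^sup>-\<^sup>1\<close> (\<open>\<zeta>\<close> a primitive root of unity of the order of \<open>a\<^sub>3\<close> modulo
  \<open>D\<langle>a\<^sub>1, a\<^sub>2\<rangle>\<close>) one can be taken for \<open>\<chi>(a\<^sub>3)\<close>. The restrictions of \<open>\<chi>\<close> to the three
  factors form an admissible triple of the first kind that is nontrivial at the \<open>\<sigma>\<^sub>i\<close>,
  contradicting \<open>\<tau> \<in> G(\<sigma>)\<close>.
\<close>

section \<open>Roots of unity\<close>

lemma exists_nth_root: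
  fixes z :: complex
  assumes "0 < m" "z \<noteq> 0"
  shows "\<exists>w. w ^ m = z"
proof -
  have card: "card {w. w ^ m = z} = m" using card_nth_roots assms by blast
  have "{w. w ^ m = z} \<noteq> {}"
  proof
    assume "{w. w ^ m = z} = {}"
    then show False using card assms(1) by simp
  qed
  then show ?thesis by blast
qed

lemma exists_nth_root_ne_1:
  fixes z :: complex
  assumes "2 \<le> m" "z \<noteq> 0"
  shows "\<exists>w. w ^ m = z \<and> w \<noteq> 1"
proof (rule ccontr)
  assume "\<nexists>w. w ^ m = z \<and> w \<noteq> 1"
  then have "{w. w ^ m = z} \<subseteq> {1}" by blast
  then have "card {w. w ^ m = z} \<le> card {1::complex}" by (intro card_mono) auto
  then show False using card_nth_roots[of z m] assms by simp
qed

lemma primitive_root_unity_pow_eq_1: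
  assumes "0 < m"
  shows "exp (2 * of_real pi * \<i> / of_nat m) ^ k = 1 \<longleftrightarrow> m dvd k"
proof -
  have "exp (2 * of_real pi * \<i> / of_nat m) ^ k = exp (2 * of_real pi * \<i> * of_nat k / of_nat m)"
    by (simp flip: exp_of_nat_mult add: ac_simps)
  then show ?thesis using complex_root_unity_eq_1[of m k] assms by simp
qed

lemma exists_root_unity_avoiding:
  fixes c :: complex
  assumes "0 < m" "\<not> m dvd 2 * r"
  shows "\<exists>w. w ^ m = 1 \<and> w \<noteq> 1 \<and> w ^ r \<noteq> c"
proof -
  define \<zeta> where "\<zeta> = exp (2 * of_real pi * \<i> / of_nat m)"
  have \<zeta>_pow: "\<zeta> ^ k = 1 \<longleftrightarrow> m dvd k" for k
    unfolding \<zeta>_def using primitive_root_unity_pow_eq_1 assms(1) by blast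
  have "m \<noteq> 1" using assms(2) by auto
  then have \<zeta>: "\<zeta> ^ m = 1" "\<zeta> \<noteq> 1" "\<zeta> \<noteq> 0"
    using \<zeta>_pow[of m] \<zeta>_pow[of 1] unfolding \<zeta>_def by auto
  show ?thesis
  proof (cases "\<zeta> ^ r = c")
    case False
    then show ?thesis using \<zeta> by blast
  next
    case True
    have "inverse \<zeta> ^ r \<noteq> c"
    proof
      assume "inverse \<zeta> ^ r = c"
      with True have "\<zeta> ^ r * \<zeta> ^ r = \<zeta> ^ r * inverse (\<zeta> ^ r)" by (simp add: power_inverse)
      then have "\<zeta> ^ (2 * r) = 1" using \<zeta>(3) by (simp add: power_mult_distrib mult_2 power_add)
      then show False using \<zeta>_pow assms(2) by blast
    qed
    moreover have "inverse \<zeta> ^ m = 1" "inverse \<zeta> \<noteq> 1" using \<zeta> by (auto simp: power_inverse)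
    ultimately show ?thesis by blast
  qed
qed

lemma (in group) subgroup_nat_pow_closed: "subgroup H G \<Longrightarrow> h \<in> H \<Longrightarrow> h [^] (n::nat) \<in> H"
  using subgroup_int_pow_closed[of H h "int n"] by (simp add: int_pow_int)

lemma (in group) inv_eq_pow_order:
  assumes "finite (carrier G)" "x \<in> carrier G" shows "inv x = x [^] (Coset.order G - 1)"
proof (rule inv_equality)
  obtain n where "Coset.order G = Suc n" using assms(1) order_gt_0_iff_finite gr0_conv_Suc by blast
  then show "x [^] (Coset.order G - 1) \<otimes> x = \<one>" using pow_order_eq_1[OF assms(2)] by simp
qed (use assms in simp_all)

lemma comm_group_DirProd:
  assumes "comm_group G" "comm_group H" shows "comm_group (G \<times>\<times> H)"
proof -
  interpret G: comm_group G by fact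
  interpret H: comm_group H by fact
  show ?thesis
    by (rule group.group_comm_groupI[OF DirProd_group[OF G.is_group H.is_group]]) (auto simp: G.m_comm H.m_comm)
qed

lemma comm_group_subgroup:
  assumes "comm_group G" "subgroup H G" shows "comm_group (G\<lparr>carrier := H\<rparr>)"
proof -
  interpret G: comm_group G by fact
  show ?thesis
    by (rule group.group_comm_groupI[OF subgroup.subgroup_is_group[OF assms(2) G.is_group]])
      (auto simp: G.m_comm subgroup.mem_carrier[OF assms(2)])
qed

lemma nat_pow_DirProd: "(a, b) [^]\<^bsub>G \<times>\<times> H\<^esub> (n::nat) = (a [^]\<^bsub>G\<^esub> n, b [^]\<^bsub>H\<^esub> n)"
  by (induction n) auto

context comm_group
begin

lemma FactGroup_square_eq_one:
  assumes N: "subgroup N G" and sq: "\<And>t. t \<in> carrier G \<Longrightarrow> t \<otimes> t \<in> N" and Z: "Z \<in> carrier (G Mod N)"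
  shows "Z \<otimes>\<^bsub>G Mod N\<^esub> Z = \<one>\<^bsub>G Mod N\<^esub>"
proof -
  interpret N: normal N G using subgroup_imp_normal[OF N] .
  obtain t where t: "t \<in> carrier G" "Z = N #> t" using Z unfolding FactGroup_def RCOSETS_def by auto
  then have "Z \<otimes>\<^bsub>G Mod N\<^esub> Z = N #> (t \<otimes> t)" by (simp add: N.rcos_sum)
  also have "\<dots> = N" using coset_join2[OF _ N sq[OF t(1)]] t(1) by simp
  finally show ?thesis by simp
qed

end

text \<open>A character of a subgroup \<open>A\<close> of \<open>G\<close> is a character of \<open>G\<lparr>carrier := A\<rparr>\<close>.\<close>

lemma character_restrict:
  "character G chi \<Longrightarrow> A \<subseteq> carrier G \<Longrightarrow> character (G\<lparr>carrier := A\<rparr>) chi"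
  unfolding character_def by auto

lemma character_mult:
  "character G chi \<Longrightarrow> x \<in> carrier G \<Longrightarrow> y \<in> carrier G \<Longrightarrow> chi (x \<otimes>\<^bsub>G\<^esub> y) = chi x * chi y"
  unfolding character_def by blast

lemma character_comp_hom: "character H x \<Longrightarrow> f \<in> hom G H \<Longrightarrow> character G (x \<circ> f)"
  unfolding character_def hom_def by auto

lemma character_const_1: "character (G\<lparr>carrier := A\<rparr>) (\<lambda>_. 1)"
  by (simp add: character_def)

lemma (in monoid) character_one:
  assumes "character G chi" shows "chi \<one> = 1"
proof -
  have "chi \<one> = chi \<one> * chi \<one>" using character_mult[OF assms, of \<one> \<one>] by simp
  moreover have "chi \<one> \<noteq> 0" using assms unfolding character_def by blast
  ultimately show ?thesis by (metis mult_cancel_left1)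
qed

lemma (in monoid) character_pow:
  assumes "character G chi" "x \<in> carrier G" shows "chi (x [^] (n::nat)) = chi x ^ n"
proof (induction n)
  case 0
  then show ?case using character_one[OF assms(1)] by simp
next
  case (Suc n)
  then show ?case using character_mult[OF assms(1) nat_pow_closed[OF assms(2)] assms(2)] by simp
qed

lemma (in group) character_inv:
  assumes "character G chi" "x \<in> carrier G" shows "chi (inv x) = inverse (chi x)"
proof -
  have "chi x * chi (inv x) = 1"
    using character_mult[OF assms(1) assms(2) inv_closed[OF assms(2)]] assms by (simp add: character_one)
  then show ?thesis by (simp add: inverse_unique)
qed

lemma (in group) norm_character:
  assumes "finite (carrier G)" "character G chi" "x \<in> carrier G" shows "norm (chi x) = 1"
proof -
  have "chi x ^ Coset.order G = chi (x [^] Coset.order G)" using character_pow[OF assms(2,3)] by simp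
  also have "\<dots> = 1" using assms(3) by (simp add: pow_order_eq_1 character_one[OF assms(2)])
  finally have "norm (chi x) = 1 \<or> Coset.order G = 0" by (rule power_eq_1_iff)
  then show ?thesis using assms(1) order_gt_0_iff_finite by simp
qed

lemma (in group) cnj_character:
  assumes "finite (carrier G)" "character G chi" "x \<in> carrier G" shows "cnj (chi x) = inverse (chi x)"
proof -
  have "chi x * cnj (chi x) = 1" using norm_character[OF assms] complex_norm_square[of "chi x"] by simp
  then show ?thesis by (simp add: inverse_unique)
qed

lemma (in group) subgroup_character_one:
  assumes "subgroup A G" "character (G\<lparr>carrier := A\<rparr>) y" shows "y \<one> = 1"
  using monoid.character_one[OF group.is_monoid[OF subgroup.subgroup_is_group[OF assms(1) is_group]] assms(2)]
  by simp

lemma (in group) subgroup_character_pow: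
  assumes "subgroup A G" "character (G\<lparr>carrier := A\<rparr>) y" "x \<in> A" shows "y (x [^] (n::nat)) = y x ^ n"
  using monoid.character_pow[OF group.is_monoid[OF subgroup.subgroup_is_group[OF assms(1) is_group]] assms(2)]
    assms(3) by (simp flip: nat_pow_consistent)

lemma (in group) subgroup_kernel_characters:
  assumes "\<And>\<psi>. Q \<psi> \<Longrightarrow> character G \<psi>"
  shows "subgroup {g \<in> carrier G. \<forall>\<psi>. Q \<psi> \<longrightarrow> \<psi> g = 1} G" (is "subgroup ?N G")
proof (rule subgroupI)
  show "?N \<noteq> {}" using character_one[OF assms] by blast
next
  fix g assume g: "g \<in> ?N"
  have "\<psi> (inv g) = 1" if "Q \<psi>" for \<psi> using character_inv[OF assms[OF that], of g] g that by simp
  then show "inv g \<in> ?N" using g by simp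
next
  fix g h assume g: "g \<in> ?N" and h: "h \<in> ?N"
  have "\<psi> (g \<otimes> h) = 1" if "Q \<psi>" for \<psi> using character_mult[OF assms[OF that], of g h] g h that by auto
  then show "g \<otimes> h \<in> ?N" using g h by simp
qed auto

section \<open>Extending characters of finite abelian groups\<close>

text \<open>For finite \<open>G\<close> and a subgroup \<open>A\<close> this is the subgroup generated by \<open>A\<close> and \<open>h\<close>;
  natural exponents suffice because \<open>h\<close> has finite order.\<close>

definition adjoin :: "('a, 'b) monoid_scheme \<Rightarrow> 'a set \<Rightarrow> 'a \<Rightarrow> 'a set" where
  "adjoin G A h = {a \<otimes>\<^bsub>G\<^esub> h [^]\<^bsub>G\<^esub> (k::nat) | a k. a \<in> A}"

context comm_group
begin

lemma adjoinI: "a \<in> A \<Longrightarrow> a \<otimes> h [^] (k::nat) \<in> adjoin G A h"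
  unfolding adjoin_def by blast

lemma adjoinE:
  assumes "x \<in> adjoin G A h" obtains a and k :: nat where "a \<in> A" "x = a \<otimes> h [^] k"
  using assms unfolding adjoin_def by blast

lemma mult_pow_mult_pow:
  assumes "a \<in> carrier G" "b \<in> carrier G" "h \<in> carrier G"
  shows "(a \<otimes> h [^] (k::nat)) \<otimes> (b \<otimes> h [^] (j::nat)) = (a \<otimes> b) \<otimes> h [^] (k + j)"
  using assms by (simp add: m_ac nat_pow_mult add.commute)

lemma subset_adjoin: "subgroup A G \<Longrightarrow> A \<subseteq> adjoin G A h"
  using adjoinI[of _ A h 0] subgroup.mem_carrier by fastforce

lemma mem_adjoin: "subgroup A G \<Longrightarrow> h \<in> carrier G \<Longrightarrow> h \<in> adjoin G A h"
  using adjoinI[of \<one> A h 1] subgroup.one_closed by fastforce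

lemma subgroup_adjoin:
  assumes fin: "finite (carrier G)" and A: "subgroup A G" and h: "h \<in> carrier G"
  shows "subgroup (adjoin G A h) G"
proof (rule subgroupI)
  have Ac: "A \<subseteq> carrier G" by (rule subgroup.subset[OF A])
  show "adjoin G A h \<subseteq> carrier G" using Ac h by (auto elim: adjoinE)
  show "adjoin G A h \<noteq> {}" using mem_adjoin[OF A h] by blast
next
  fix x assume "x \<in> adjoin G A h"
  then obtain a k where a: "a \<in> A" and x: "x = a \<otimes> h [^] (k::nat)" by (rule adjoinE)
  have "inv x = inv a \<otimes> inv (h [^] k)"
    using x subgroup.mem_carrier[OF A a] h by (simp add: inv_mult m_comm)
  also have "\<dots> = inv a \<otimes> h [^] (k * (Coset.order G - 1))"
    using inv_eq_pow_order[OF fin, of "h [^] k"] h by (simp add: nat_pow_pow)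
  finally have "inv x = inv a \<otimes> h [^] (k * (Coset.order G - 1))" .
  then show "inv x \<in> adjoin G A h" using subgroup.m_inv_closed[OF A a] by (simp add: adjoinI)
next
  fix x y assume "x \<in> adjoin G A h" "y \<in> adjoin G A h"
  then obtain a b k j where ab: "a \<in> A" "b \<in> A" and "x = a \<otimes> h [^] (k::nat)" "y = b \<otimes> h [^] (j::nat)"
    by (metis adjoinE)
  then have "x \<otimes> y = (a \<otimes> b) \<otimes> h [^] (k + j)"
    using subgroup.mem_carrier[OF A] h by (simp add: mult_pow_mult_pow)
  then show "x \<otimes> y \<in> adjoin G A h" using subgroup.m_closed[OF A ab] by (simp add: adjoinI)
qed

lemma pow_mem_subgroup_iff_dvd:
  assumes fin: "finite (carrier G)" and A: "subgroup A G" and h: "h \<in> carrier G"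
  obtains m where "0 < m" "\<And>k::nat. h [^] k \<in> A \<longleftrightarrow> m dvd k"
proof -
  interpret N: normal A G using subgroup_imp_normal[OF A] .
  interpret Q: group "G Mod A" by (rule N.factorgroup_is_group)
  have c: "A #> h \<in> carrier (G Mod A)" using h by (auto simp: FactGroup_def RCOSETS_def)
  have "finite (carrier (G Mod A))" using fin by (simp add: FactGroup_def RCOSETS_def)
  then have "0 < Q.ord (A #> h)" using Q.ord_ge_1[OF _ c] by simp
  moreover have "h [^] k \<in> A \<longleftrightarrow> Q.ord (A #> h) dvd k" for k :: nat
  proof -
    have "h [^] k \<in> A \<longleftrightarrow> A #> h [^] k = A"
      using coset_join1[of A "h [^] k"] coset_join2[of "h [^] k" A] A h by auto
    also have "\<dots> \<longleftrightarrow> (A #> h) [^]\<^bsub>G Mod A\<^esub> k = \<one>\<^bsub>G Mod A\<^esub>"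
      using N.FactGroup_pow[OF h] by simp
    also have "\<dots> \<longleftrightarrow> Q.ord (A #> h) dvd k" by (rule Q.pow_eq_id[OF c])
    finally show ?thesis .
  qed
  ultimately show ?thesis using that by blast
qed

lemma character_adjoin_well_defined:
  assumes A: "subgroup A G" and y: "character (G\<lparr>carrier := A\<rparr>) y" and h: "h \<in> carrier G"
    and m: "\<And>k::nat. h [^] k \<in> A \<longleftrightarrow> m dvd k" and w: "w ^ m = y (h [^] m)"
    and a: "a \<in> A" "a' \<in> A" and eq: "a \<otimes> h [^] k = a' \<otimes> h [^] k'" and "k' \<le> k"
  shows "y a * w ^ k = y a' * w ^ k'"
proof -
  have ac: "a \<in> carrier G" "a' \<in> carrier G" using a subgroup.mem_carrier[OF A] by auto
  have "h [^] (k - k') \<otimes> h [^] k' = h [^] k" using h \<open>k' \<le> k\<close> by (simp add: nat_pow_mult)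
  then have "(a \<otimes> h [^] (k - k')) \<otimes> h [^] k' = a' \<otimes> h [^] k'"
    using eq ac h by (simp add: m_assoc)
  then have a': "a \<otimes> h [^] (k - k') = a'" using ac h by (simp add: r_cancel)
  then have "h [^] (k - k') = inv a \<otimes> a'" using ac h by (simp add: inv_solve_left)
  then have "h [^] (k - k') \<in> A"
    using subgroup.m_closed[OF A subgroup.m_inv_closed[OF A a(1)] a(2)] by simp
  then obtain q where q: "k - k' = m * q" using m by blast
  then have "y a' = y a * y ((h [^] m) [^] q)"
    using a'[symmetric] a(1) m[of "m * q"] h y unfolding character_def by (simp add: nat_pow_pow)
  also have "\<dots> = y a * w ^ (k - k')"
    using q w subgroup_character_pow[OF A y] m[of m] by (simp add: power_mult)
  finally show ?thesis using \<open>k' \<le> k\<close> by (simp add: mult.assoc flip: power_add)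
qed

lemma character_extend_adjoin:
  assumes A: "subgroup A G" and y: "character (G\<lparr>carrier := A\<rparr>) y" and h: "h \<in> carrier G"
    and m: "0 < m" "\<And>k::nat. h [^] k \<in> A \<longleftrightarrow> m dvd k" and w: "w ^ m = y (h [^] m)"
  shows "\<exists>y'. character (G\<lparr>carrier := adjoin G A h\<rparr>) y' \<and> (\<forall>a\<in>A. y' a = y a) \<and> y' h = w"
proof -
  have Ac: "A \<subseteq> carrier G" by (rule subgroup.subset[OF A])
  have y_mult: "y (a \<otimes> b) = y a * y b" "y a \<noteq> 0" if "a \<in> A" "b \<in> A" for a b
    using y that unfolding character_def by auto
  have "w \<noteq> 0" using w m y_mult(2)[of "h [^] m" "h [^] m"] by (auto simp: power_0_left)
  note well_defined = character_adjoin_well_defined[OF A y h m(2) w]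
  define y' where "y' x = (SOME v. \<exists>a k. a \<in> A \<and> x = a \<otimes> h [^] (k::nat) \<and> v = y a * w ^ k)" for x
  have y'_eq: "y' (a \<otimes> h [^] k) = y a * w ^ k" if "a \<in> A" for a k
  proof -
    have "\<exists>a' k'. a' \<in> A \<and> a \<otimes> h [^] k = a' \<otimes> h [^] (k'::nat) \<and> y' (a \<otimes> h [^] k) = y a' * w ^ k'"
      unfolding y'_def by (rule someI_ex) (use that in blast)
    then show ?thesis using well_defined that by (metis nle_le)
  qed
  show ?thesis
  proof (intro exI conjI ballI)
    show "character (G\<lparr>carrier := adjoin G A h\<rparr>) y'"
      unfolding character_def
    proof (intro conjI ballI; simp)
      fix x assume "x \<in> adjoin G A h"
      then obtain a and k :: nat where "a \<in> A" "x = a \<otimes> h [^] k" by (rule adjoinE)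
      then show "y' x \<noteq> 0" using y'_eq y_mult(2) \<open>w \<noteq> 0\<close> by simp
      fix z assume "z \<in> adjoin G A h"
      then obtain b and j :: nat where "b \<in> A" "z = b \<otimes> h [^] j" by (rule adjoinE)
      have "x \<otimes> z = (a \<otimes> b) \<otimes> h [^] (k + j)"
        using \<open>x = _\<close> \<open>z = _\<close> \<open>a \<in> A\<close> \<open>b \<in> A\<close> Ac h by (simp add: mult_pow_mult_pow subset_iff)
      then show "y' (x \<otimes> z) = y' x * y' z"
        using y'_eq y_mult \<open>x = _\<close> \<open>z = _\<close> \<open>a \<in> A\<close> \<open>b \<in> A\<close> subgroup.m_closed[OF A]
        by (simp add: power_add)
    qed
    show "y' a = y a" if "a \<in> A" for a
      using y'_eq[OF that, of 0] that Ac by auto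
    show "y' h = w"
      using y'_eq[OF subgroup.one_closed[OF A], of 1] subgroup_character_one[OF A y] h by simp
  qed
qed

lemma character_extend:
  assumes fin: "finite (carrier G)"
  shows "subgroup A G \<Longrightarrow> character (G\<lparr>carrier := A\<rparr>) y \<Longrightarrow> \<exists>x. character G x \<and> (\<forall>a\<in>A. x a = y a)"
proof (induction "card (carrier G) - card A" arbitrary: A y rule: less_induct)
  case less
  show ?case
  proof (cases "A = carrier G")
    case True
    then show ?thesis using less.prems(2) by auto
  next
    case False
    then obtain h where h: "h \<in> carrier G" "h \<notin> A" using subgroup.subset[OF less.prems(1)] by blast
    obtain m where m: "0 < m" "\<And>k::nat. h [^] k \<in> A \<longleftrightarrow> m dvd k"
      using pow_mem_subgroup_iff_dvd[OF fin less.prems(1) h(1)] by blast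
    have "y (h [^] m) \<noteq> 0" using less.prems(2) m unfolding character_def by simp
    then obtain w where "w ^ m = y (h [^] m)" using exists_nth_root m(1) by blast
    then obtain y' where y': "character (G\<lparr>carrier := adjoin G A h\<rparr>) y'" "\<forall>a\<in>A. y' a = y a"
      using character_extend_adjoin[OF less.prems h(1) m] by blast
    have sub: "subgroup (adjoin G A h) G" by (rule subgroup_adjoin[OF fin less.prems(1) h(1)])
    have "A \<subset> adjoin G A h"
      using subset_adjoin[OF less.prems(1)] mem_adjoin[OF less.prems(1) h(1)] h(2) by blast
    then have "card A < card (adjoin G A h)"
      using finite_subset[OF subgroup.subset[OF sub] fin] by (rule psubset_card_mono[rotated])
    moreover have "card (adjoin G A h) \<le> card (carrier G)" by (rule card_mono[OF fin subgroup.subset[OF sub]])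
    ultimately have "card (carrier G) - card (adjoin G A h) < card (carrier G) - card A" by linarith
    then obtain x where x: "character G x" "\<forall>a\<in>adjoin G A h. x a = y' a"
      using less.hyps[OF _ sub y'(1)] by blast
    then show ?thesis using y'(2) \<open>A \<subset> adjoin G A h\<close> by (intro exI[of _ x]) auto
  qed
qed

lemma character_extend_adjoin_ne_1:
  assumes fin: "finite (carrier G)" and A: "subgroup A G" and y: "character (G\<lparr>carrier := A\<rparr>) y"
    and h: "h \<in> carrier G" "h \<notin> A"
  shows "\<exists>y'. character (G\<lparr>carrier := adjoin G A h\<rparr>) y' \<and> (\<forall>a\<in>A. y' a = y a) \<and> y' h \<noteq> 1"
proof -
  obtain m where m: "0 < m" "\<And>k::nat. h [^] k \<in> A \<longleftrightarrow> m dvd k"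
    using pow_mem_subgroup_iff_dvd[OF fin A h(1)] by blast
  have "m \<noteq> 1" using m(2)[of 1] h by auto
  then have "2 \<le> m" using m(1) by simp
  moreover have "y (h [^] m) \<noteq> 0" using y m unfolding character_def by simp
  ultimately obtain w where "w ^ m = y (h [^] m)" "w \<noteq> 1" using exists_nth_root_ne_1 by blast
  then show ?thesis using character_extend_adjoin[OF A y h(1) m] by blast
qed

lemma character_extend_avoiding:
  assumes fin: "finite (carrier G)" and A: "subgroup A G" and y: "character (G\<lparr>carrier := A\<rparr>) y"
    and h: "h \<in> carrier G" and trivial: "\<And>k::nat. h [^] k \<in> A \<Longrightarrow> y (h [^] k) = 1"
    and r: "h [^] (2 * r) \<notin> A"
  shows "\<exists>x. character G x \<and> (\<forall>a\<in>A. x a = y a) \<and> x h \<noteq> 1 \<and> x h ^ r \<noteq> c"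
proof -
  obtain m where m: "0 < m" "\<And>k::nat. h [^] k \<in> A \<longleftrightarrow> m dvd k"
    using pow_mem_subgroup_iff_dvd[OF fin A h] by blast
  obtain w where w: "w ^ m = 1" "w \<noteq> 1" "w ^ r \<noteq> c"
    using exists_root_unity_avoiding[OF m(1)] m(2) r by blast
  then have "w ^ m = y (h [^] m)" using trivial m(2) by simp
  then obtain y' where y': "character (G\<lparr>carrier := adjoin G A h\<rparr>) y'" "\<forall>a\<in>A. y' a = y a" "y' h = w"
    using character_extend_adjoin[OF A y h m] by blast
  obtain x where x: "character G x" "\<forall>a\<in>adjoin G A h. x a = y' a"
    using character_extend[OF fin subgroup_adjoin[OF fin A h] y'(1)] by blast
  moreover have "A \<subseteq> adjoin G A h" "h \<in> adjoin G A h"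
    using subset_adjoin[OF A] mem_adjoin[OF A h] by auto
  ultimately show ?thesis using y' w by (intro exI[of _ x]) auto
qed

end

fun successively_outside :: "('a, 'b) monoid_scheme \<Rightarrow> 'a set \<Rightarrow> 'a list \<Rightarrow> bool" where
  "successively_outside G A [] \<longleftrightarrow> True"
| "successively_outside G A (h # hs) \<longleftrightarrow>
     h \<in> carrier G \<and> h \<notin> A \<and> successively_outside G (adjoin G A h) hs"

lemma (in comm_group) character_extend_ne_1:
  assumes fin: "finite (carrier G)"
  shows "subgroup A G \<Longrightarrow> character (G\<lparr>carrier := A\<rparr>) y \<Longrightarrow> successively_outside G A hs \<Longrightarrow>
    \<exists>x. character G x \<and> (\<forall>a\<in>A. x a = y a) \<and> (\<forall>h\<in>set hs. x h \<noteq> 1)"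
proof (induction hs arbitrary: A y)
  case Nil
  then show ?case using character_extend[OF fin] by simp
next
  case (Cons h hs)
  then have h: "h \<in> carrier G" "h \<notin> A" by simp_all
  obtain y' where y': "character (G\<lparr>carrier := adjoin G A h\<rparr>) y'" "\<forall>a\<in>A. y' a = y a" "y' h \<noteq> 1"
    using character_extend_adjoin_ne_1[OF fin Cons.prems(1,2) h] by blast
  have "successively_outside G (adjoin G A h) hs" using Cons.prems(3) by simp
  then obtain x where "character G x" "\<forall>a\<in>adjoin G A h. x a = y' a" "\<forall>h\<in>set hs. x h \<noteq> 1"
    using Cons.IH[OF subgroup_adjoin[OF fin Cons.prems(1) h(1)] y'(1)] by blast
  moreover have "A \<subseteq> adjoin G A h" "h \<in> adjoin G A h"
    using subset_adjoin[OF Cons.prems(1)] mem_adjoin[OF Cons.prems(1) h(1)] by auto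
  ultimately show ?case using y' by (intro exI[of _ x]) auto
qed

section \<open>Characters separating independent elements\<close>

definition independent_mod :: "('a, 'b) monoid_scheme \<Rightarrow> 'a set \<Rightarrow> 'a \<Rightarrow> 'a \<Rightarrow> 'a \<Rightarrow> bool" where
  "independent_mod G D b1 b2 b3 \<longleftrightarrow>
     (\<forall>(p::nat) (q::nat) (r::nat). b1 [^]\<^bsub>G\<^esub> p \<otimes>\<^bsub>G\<^esub> b2 [^]\<^bsub>G\<^esub> q \<otimes>\<^bsub>G\<^esub> b3 [^]\<^bsub>G\<^esub> r \<in> D \<longrightarrow>
        b1 [^]\<^bsub>G\<^esub> p \<in> D \<and> b2 [^]\<^bsub>G\<^esub> q \<in> D \<and> b3 [^]\<^bsub>G\<^esub> r \<in> D)"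

context comm_group
begin

lemma independent_mod_swap12:
  assumes "independent_mod G D b1 b2 b3" "b1 \<in> carrier G" "b2 \<in> carrier G"
  shows "independent_mod G D b2 b1 b3"
  using assms unfolding independent_mod_def by (metis m_comm nat_pow_closed)

lemma independent_mod_swap23:
  assumes "independent_mod G D b1 b2 b3" "b1 \<in> carrier G" "b2 \<in> carrier G" "b3 \<in> carrier G"
  shows "independent_mod G D b1 b3 b2"
  unfolding independent_mod_def
proof (intro allI impI)
  fix p q r :: nat
  have "b1 [^] p \<otimes> b3 [^] q \<otimes> b2 [^] r = b1 [^] p \<otimes> b2 [^] r \<otimes> b3 [^] q"
    using assms(2-4) by (simp add: m_ac)
  then show "b1 [^] p \<otimes> b3 [^] q \<otimes> b2 [^] r \<in> D \<Longrightarrow> b1 [^] p \<in> D \<and> b3 [^] q \<in> D \<and> b2 [^] r \<in> D"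
    using assms(1) unfolding independent_mod_def by auto
qed

lemma independent_mod_pow_mem_adjoin:
  assumes fin: "finite (carrier G)" and D: "subgroup D G" and indep: "independent_mod G D b1 b2 b3"
    and b: "b1 \<in> carrier G" "b2 \<in> carrier G" "b3 \<in> carrier G"
    and k: "b3 [^] (k::nat) \<in> adjoin G (adjoin G D b1) b2"
  shows "b3 [^] k \<in> D"
proof -
  obtain e and q :: nat where e: "e \<in> adjoin G D b1" "b3 [^] k = e \<otimes> b2 [^] q"
    using k by (rule adjoinE)
  obtain d and p :: nat where d: "d \<in> D" "e = d \<otimes> b1 [^] p"
    using e(1) by (rule adjoinE)
  let ?N = "Coset.order G - 1"
  have dc: "d \<in> carrier G" using d subgroup.mem_carrier[OF D] by blast
  have "b3 [^] k = (b1 [^] p \<otimes> b2 [^] q) \<otimes> d" using e d dc b by (simp add: m_ac)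
  then have "d = inv (b1 [^] p \<otimes> b2 [^] q) \<otimes> b3 [^] k" using dc b by (simp add: inv_solve_left)
  also have "inv (b1 [^] p \<otimes> b2 [^] q) = inv (b1 [^] p) \<otimes> inv (b2 [^] q)"
    using b by (simp add: inv_mult m_comm)
  also have "\<dots> = b1 [^] (p * ?N) \<otimes> b2 [^] (q * ?N)"
    using inv_eq_pow_order[OF fin, of "b1 [^] p"] inv_eq_pow_order[OF fin, of "b2 [^] q"] b
    by (simp add: nat_pow_pow)
  finally show ?thesis using indep d(1) unfolding independent_mod_def by metis
qed

lemma independent_mod_successively_outside:
  assumes fin: "finite (carrier G)" and D: "subgroup D G" and indep: "independent_mod G D b1 b2 b3"
    and b: "b1 \<in> carrier G" "b2 \<in> carrier G" "b3 \<in> carrier G" and nb: "b1 \<notin> D" "b2 \<notin> D" "b3 \<notin> D"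
  shows "successively_outside G D [b1, b2, b3]"
proof -
  have "b2 \<notin> adjoin G (adjoin G D b1) b3"
    using independent_mod_pow_mem_adjoin[OF fin D independent_mod_swap23[OF indep b] b(1,3,2), of 1] nb b
    by auto
  then have "b2 \<notin> adjoin G D b1"
    using subset_adjoin[OF subgroup_adjoin[OF fin D b(1)], of b3] by auto
  moreover have "b3 \<notin> adjoin G (adjoin G D b1) b2"
    using independent_mod_pow_mem_adjoin[OF fin D indep b, of 1] nb b by auto
  ultimately show ?thesis using b nb by simp
qed

lemma separating_character_in_span:
  assumes fin: "finite (carrier G)" and D: "subgroup D G" and indep: "independent_mod G D b1 b2 b3"
    and b: "b1 \<in> carrier G" "b2 \<in> carrier G" "b3 \<in> carrier G" and nb: "b1 \<notin> D" "b2 \<notin> D"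
    and d: "d \<in> D" and \<tau>: "\<tau> = d \<otimes> b1 [^] (p::nat) \<otimes> b2 [^] (q::nat) \<otimes> b3 [^] (r::nat)"
    and r: "b3 [^] (2 * r) \<notin> D"
  shows "\<exists>x. character G x \<and> (\<forall>d\<in>D. x d = 1) \<and> x b1 \<noteq> 1 \<and> x b2 \<noteq> 1 \<and> x b3 \<noteq> 1 \<and> x \<tau> \<noteq> 1"
proof -
  have "b3 \<notin> D" using r subgroup_nat_pow_closed[OF D] by blast
  then have "successively_outside G D [b1, b2]"
    using independent_mod_successively_outside[OF fin D indep b nb] by simp
  from character_extend_ne_1[OF fin D character_const_1 this]
  obtain x2 where x2: "character G x2" "\<forall>d\<in>D. x2 d = 1" "x2 b1 \<noteq> 1" "x2 b2 \<noteq> 1" by auto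
  define A where "A = adjoin G (adjoin G D b1) b2"
  have A: "subgroup A G" unfolding A_def by (intro subgroup_adjoin fin D b)
  have "D \<subseteq> adjoin G D b1" "b1 \<in> adjoin G D b1" "adjoin G D b1 \<subseteq> A" "b2 \<in> A"
    unfolding A_def using subset_adjoin mem_adjoin D subgroup_adjoin[OF fin D b(1)] b by auto
  then have DA: "D \<subseteq> A" "b1 \<in> A" "b2 \<in> A" by auto
  define e where "e = d \<otimes> b1 [^] p \<otimes> b2 [^] q"
  have e: "e \<in> A" unfolding e_def A_def by (intro adjoinI d)
  have b3_pow: "b3 [^] k \<in> A \<Longrightarrow> b3 [^] k \<in> D" for k :: nat
    unfolding A_def by (rule independent_mod_pow_mem_adjoin[OF fin D indep b])
  obtain x where x: "character G x" "\<forall>a\<in>A. x a = x2 a" "x b3 \<noteq> 1" "x b3 ^ r \<noteq> inverse (x2 e)"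
    using character_extend_avoiding[OF fin A character_restrict[OF x2(1) subgroup.subset[OF A]] b(3)]
      b3_pow x2(2) r by blast
  have "x \<tau> = x2 e * x b3 ^ r"
    using \<tau> e x b(3) subgroup.mem_carrier[OF A] by (simp add: character_mult monoid.character_pow flip: e_def)
  moreover have "x2 e \<noteq> 0" using x2(1) e subgroup.mem_carrier[OF A] unfolding character_def by blast
  ultimately have "x \<tau> \<noteq> 1" using x(4) by (auto simp: field_simps)
  then show ?thesis using x x2 DA by (intro exI[of _ x]) auto
qed

lemma separating_character:
  assumes fin: "finite (carrier G)" and D: "subgroup D G" and indep: "independent_mod G D b1 b2 b3"
    and b: "b1 \<in> carrier G" "b2 \<in> carrier G" "b3 \<in> carrier G" and nb: "b1 \<notin> D" "b2 \<notin> D" "b3 \<notin> D"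
    and \<tau>: "\<tau> \<in> carrier G" "\<tau> \<otimes> \<tau> \<notin> D"
  shows "\<exists>x. character G x \<and> (\<forall>d\<in>D. x d = 1) \<and> x b1 \<noteq> 1 \<and> x b2 \<noteq> 1 \<and> x b3 \<noteq> 1 \<and> x \<tau> \<noteq> 1"
proof (cases "\<tau> \<in> adjoin G (adjoin G (adjoin G D b1) b2) b3")
  case False
  then have "successively_outside G D [b1, b2, b3, \<tau>]"
    using independent_mod_successively_outside[OF fin D indep b nb] \<tau>(1) by simp
  from character_extend_ne_1[OF fin D character_const_1 this] show ?thesis by auto
next
  case True
  then obtain d and p q r :: nat where d: "d \<in> D" and \<tau>_eq: "\<tau> = d \<otimes> b1 [^] p \<otimes> b2 [^] q \<otimes> b3 [^] r"
    by (metis adjoinE)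
  have dc: "d \<in> carrier G" using d subgroup.mem_carrier[OF D] by blast
  have "\<tau> \<otimes> \<tau> = (d \<otimes> d) \<otimes> b1 [^] (2 * p) \<otimes> b2 [^] (2 * q) \<otimes> b3 [^] (2 * r)"
    using \<tau>_eq dc b by (simp add: m_ac mult_2 flip: nat_pow_mult)
  then have "\<not> (b1 [^] (2 * p) \<in> D \<and> b2 [^] (2 * q) \<in> D \<and> b3 [^] (2 * r) \<in> D)"
    using \<tau>(2) d subgroup.m_closed[OF D] by metis
  then consider "b3 [^] (2 * r) \<notin> D" | "b2 [^] (2 * q) \<notin> D" | "b1 [^] (2 * p) \<notin> D" by blast
  then show ?thesis
  proof cases
    case 1
    from separating_character_in_span[OF fin D indep b nb(1,2) d \<tau>_eq this] show ?thesis by blast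
  next
    case 2
    have "\<tau> = d \<otimes> b1 [^] p \<otimes> b3 [^] r \<otimes> b2 [^] q" using \<tau>_eq dc b by (simp add: m_ac)
    from separating_character_in_span[OF fin D independent_mod_swap23[OF indep b] b(1,3,2) nb(1,3) d this 2]
    show ?thesis by blast
  next
    case 3
    have "\<tau> = d \<otimes> b2 [^] q \<otimes> b3 [^] r \<otimes> b1 [^] p" using \<tau>_eq dc b by (simp add: m_ac)
    moreover have "independent_mod G D b2 b3 b1"
      using independent_mod_swap23[OF independent_mod_swap12[OF indep b(1,2)] b(2,1,3)] .
    ultimately show ?thesis using separating_character_in_span[OF fin D _ b(2,3,1) nb(2,3) d _ 3] by blast
  qed
qed

end

section \<open>Finite abelian groups of exponent 2\<close>

context comm_group
begin

lemma finprod_symdiff_exponent_2: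
  assumes sq: "\<And>x. x \<in> carrier G \<Longrightarrow> x \<otimes> x = \<one>"
    and A: "A \<subseteq> carrier G" "finite A" and B: "B \<subseteq> carrier G" "finite B"
  shows "finprod G id A \<otimes> finprod G id B = finprod G id (sym_diff A B)"
proof -
  let ?P = "finprod G id"
  have split: "?P U = ?P (U - V) \<otimes> ?P (U \<inter> V)" if "U \<subseteq> carrier G" "finite U" for U V
  proof -
    have "?P U = ?P ((U - V) \<union> (U \<inter> V))" by (simp add: Un_Diff_Int)
    also have "\<dots> = ?P (U - V) \<otimes> ?P (U \<inter> V)"
      by (rule finprod_Un_disjoint) (use that in auto)
    finally show ?thesis .
  qed
  have cl: "?P U \<in> carrier G" if "U \<subseteq> carrier G" for U using that by (intro finprod_closed) auto
  have c: "?P (A - B) \<in> carrier G" "?P (B - A) \<in> carrier G" "?P (A \<inter> B) \<in> carrier G"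
    using A B by (auto intro: cl)
  have "?P A \<otimes> ?P B = (?P (A - B) \<otimes> ?P (B - A)) \<otimes> (?P (A \<inter> B) \<otimes> ?P (A \<inter> B))"
    using split[OF A, of B] split[OF B, of A] c by (simp add: Int_commute m_ac)
  also have "\<dots> = ?P (A - B) \<otimes> ?P (B - A)" using sq[OF c(3)] c by simp
  also have "\<dots> = ?P (sym_diff A B)"
    by (rule finprod_Un_disjoint[symmetric]) (use A B in auto)
  finally show ?thesis .
qed

lemma finprod_insert_id:
  "b \<notin> U \<Longrightarrow> insert b U \<subseteq> carrier G \<Longrightarrow> finite U \<Longrightarrow> finprod G id (insert b U) = b \<otimes> finprod G id U"
  by (simp add: Pi_iff subset_iff)

lemma exponent_2_spans_Diff:
  assumes sq: "\<And>x. x \<in> carrier G \<Longrightarrow> x \<otimes> x = \<one>"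
    and B: "B \<subseteq> carrier G" "finite B" "carrier G \<subseteq> finprod G id ` Pow B"
    and E: "E \<subseteq> B" "finprod G id E = \<one>" and b: "b \<in> E"
  shows "carrier G \<subseteq> finprod G id ` Pow (B - {b})"
proof
  let ?P = "finprod G id"
  have sub: "U \<subseteq> carrier G" "finite U" if "U \<subseteq> B" for U using that B finite_subset by auto
  have cl: "?P U \<in> carrier G" if "U \<subseteq> B" for U using sub[OF that] by (intro finprod_closed) auto
  have bc: "b \<in> carrier G" using b E B by auto
  have "b \<otimes> ?P (E - {b}) = \<one>"
    using finprod_insert_id[of b "E - {b}"] b E sub[of E] by (simp add: insert_absorb)
  then have "inv ?P (E - {b}) = b" using bc cl[of "E - {b}"] E by (intro inv_equality) auto
  moreover have "inv ?P (E - {b}) = ?P (E - {b})" using sq cl[of "E - {b}"] E by (intro inv_equality) auto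
  ultimately have b_eq: "b = ?P (E - {b})" by simp
  fix x assume "x \<in> carrier G"
  then obtain U where U: "U \<subseteq> B" "x = ?P U" using B by auto
  show "x \<in> ?P ` Pow (B - {b})"
  proof (cases "b \<in> U")
    case False
    then show ?thesis using U by auto
  next
    case True
    have "x = b \<otimes> ?P (U - {b})"
      using finprod_insert_id[of b "U - {b}"] True U sub[of U] by (simp add: insert_absorb)
    also have "\<dots> = ?P (U - {b}) \<otimes> b" by (rule m_comm[OF bc cl]) (use U in auto)
    also have "\<dots> = ?P (U - {b}) \<otimes> ?P (E - {b})" using b_eq by (rule arg_cong)
    also have "\<dots> = ?P (sym_diff (U - {b}) (E - {b}))"
      by (rule finprod_symdiff_exponent_2[OF sq]) (use U E sub[of "U - {b}"] sub[of "E - {b}"] in auto)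
    finally show ?thesis using U E by blast
  qed
qed

lemma exponent_2_basis:
  assumes fin: "finite (carrier G)" and sq: "\<And>x. x \<in> carrier G \<Longrightarrow> x \<otimes> x = \<one>"
  obtains B where "B \<subseteq> carrier G" "bij_betw (finprod G id) (Pow B) (carrier G)"
proof -
  let ?P = "finprod G id"
  let ?spans = "\<lambda>B. B \<subseteq> carrier G \<and> carrier G \<subseteq> ?P ` Pow B"
  have "x \<in> ?P ` Pow (carrier G)" if "x \<in> carrier G" for x
    using finprod_insert_id[of x "{}"] that by (intro image_eqI[of x _ "{x}"]) auto
  then have "?spans (carrier G)" by blast
  from ex_has_least_nat[of ?spans, OF this, of card]
  obtain B where B: "?spans B" and min: "\<And>B'. ?spans B' \<Longrightarrow> card B \<le> card B'" by blast
  have finB: "finite B" using B fin finite_subset by blast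
  have sub: "U \<subseteq> carrier G" "finite U" if "U \<subseteq> B" for U using that B finB finite_subset by auto
  have cl: "?P U \<in> carrier G" if "U \<subseteq> carrier G" for U using that by (intro finprod_closed) auto
  have "inj_on ?P (Pow B)"
  proof (rule inj_onI, rule ccontr)
    fix T T' assume T: "T \<in> Pow B" "T' \<in> Pow B" and eq: "?P T = ?P T'" and "T \<noteq> T'"
    obtain b where b: "b \<in> sym_diff T T'" using \<open>T \<noteq> T'\<close> by blast
    have E: "sym_diff T T' \<subseteq> B" using T by auto
    have "?P (sym_diff T T') = ?P T \<otimes> ?P T'" using finprod_symdiff_exponent_2[OF sq] T sub by simp
    also have "\<dots> = \<one>" using eq sq cl T sub by simp
    finally have "carrier G \<subseteq> ?P ` Pow (B - {b})"
      using exponent_2_spans_Diff[OF sq _ finB _ E _ b] B by blast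
    then have "card B \<le> card (B - {b})" using B by (intro min) blast
    moreover have "card (B - {b}) < card B" using card_Diff1_less[OF finB] b E by blast
    ultimately show False by simp
  qed
  moreover have "?P ` Pow B = carrier G" using B cl by auto
  ultimately show thesis using that B by (simp add: bij_betw_def)
qed

end

lemma image_sym_diff:
  "inj_on f C \<Longrightarrow> A \<subseteq> C \<Longrightarrow> B \<subseteq> C \<Longrightarrow> f ` sym_diff A B = sym_diff (f ` A) (f ` B)"
  unfolding inj_on_def by blast

lemma bij_betw_ones:
  "bij_betw (\<lambda>f. {i \<in> I. f i = (1::int)}) (\<Pi>\<^sub>E i\<in>I. {0..<2}) (Pow I)"
proof (rule bij_betw_byWitness[where f' = "\<lambda>S. \<lambda>i\<in>I. if i \<in> S then 1 else (0::int)"])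
  show "\<forall>f\<in>\<Pi>\<^sub>E i\<in>I. {0..<2::int}. (\<lambda>i\<in>I. if i \<in> {i \<in> I. f i = 1} then 1 else 0) = f"
  proof
    fix f :: "'a \<Rightarrow> int" assume f: "f \<in> (\<Pi>\<^sub>E i\<in>I. {0..<2})"
    have "f i = 0 \<or> f i = 1" if "i \<in> I" for i
      using f that by (auto simp: PiE_iff)
    then show "(\<lambda>i\<in>I. if i \<in> {i \<in> I. f i = 1} then 1 else 0) = f"
      using f by (intro extensionalityI[of _ I]) (auto simp: PiE_iff)
  qed
  show "\<forall>S\<in>Pow I. {i \<in> I. (\<lambda>i\<in>I. if i \<in> S then 1 else 0) i = (1::int)} = S" by auto
  show "(\<lambda>f. {i \<in> I. f i = 1}) ` (\<Pi>\<^sub>E i\<in>I. {0..<2}) \<subseteq> Pow I" by auto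
  show "(\<lambda>S. \<lambda>i\<in>I. if i \<in> S then 1 else 0) ` Pow I \<subseteq> (\<Pi>\<^sub>E i\<in>I. {0..<2::int})" by auto
qed

lemma ones_mult_integer_mod_2:
  assumes "f \<in> carrier (product_group I (\<lambda>_. integer_mod_group 2))"
    and "g \<in> carrier (product_group I (\<lambda>_. integer_mod_group 2))"
  shows "{i \<in> I. (f \<otimes>\<^bsub>product_group I (\<lambda>_. integer_mod_group 2)\<^esub> g) i = 1}
    = sym_diff {i \<in> I. f i = 1} {i \<in> I. g i = (1::int)}"
proof -
  have "(x + y) mod 2 = 1 \<longleftrightarrow> (x = 1) \<noteq> (y = 1)" if "x \<in> {0..<2::int}" "y \<in> {0..<2::int}" for x y
  proof -
    have "x = 0 \<or> x = 1" "y = 0 \<or> y = 1" using that by auto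
    then show ?thesis by (elim disjE) simp_all
  qed
  moreover have "f i \<in> {0..<2}" "g i \<in> {0..<2}" if "i \<in> I" for i
    using assms that by (simp_all add: carrier_integer_mod_group PiE_iff)
  ultimately show ?thesis by auto
qed

theorem exponent_2_imp_elementary_abelian_2_group:
  assumes "comm_group Q" and fin: "finite (carrier Q)" and sq: "\<And>x. x \<in> carrier Q \<Longrightarrow> x \<otimes>\<^bsub>Q\<^esub> x = \<one>\<^bsub>Q\<^esub>"
  shows "elementary_abelian_2_group Q"
proof -
  interpret Q: comm_group Q by fact
  obtain B where B: "B \<subseteq> carrier Q" "bij_betw (finprod Q id) (Pow B) (carrier Q)"
    using Q.exponent_2_basis[OF fin sq] by blast
  have finB: "finite B" using B(1) fin finite_subset by blast
  obtain e where e: "bij_betw e {..<card B} B"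
    using ex_bij_betw_nat_finite[OF finB] by (auto simp: lessThan_atLeast0)
  let ?Z = "product_group {..<card B} (\<lambda>_. integer_mod_group 2)"
  define supp where "supp f = e ` {i \<in> {..<card B}. f i = (1::int)}" for f
  have carrier_Z: "carrier ?Z = (\<Pi>\<^sub>E i\<in>{..<card B}. {0..<2})" by (simp add: carrier_integer_mod_group)
  have bij_supp: "bij_betw supp (carrier ?Z) (Pow B)"
    unfolding supp_def carrier_Z using bij_betw_trans[OF bij_betw_ones bij_betw_image_Pow[OF e]]
    by (simp add: comp_def)
  have supp_mult: "supp (f \<otimes>\<^bsub>?Z\<^esub> g) = sym_diff (supp f) (supp g)"
    if "f \<in> carrier ?Z" "g \<in> carrier ?Z" for f g
    unfolding supp_def ones_mult_integer_mod_2[OF that]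
    by (simp add: image_sym_diff[OF bij_betw_imp_inj_on[OF e]] subset_iff)
  have sub_supp: "supp f \<subseteq> carrier Q" "finite (supp f)" for f
    unfolding supp_def using bij_betw_imp_surj_on[OF e] B(1) finite_subset[OF _ finB] by auto
  have "finprod Q id \<circ> supp \<in> iso ?Z Q"
  proof (rule isoI)
    show "finprod Q id \<circ> supp \<in> hom ?Z Q"
    proof (rule homI)
      show "(finprod Q id \<circ> supp) f \<in> carrier Q" for f
        by (simp, intro Q.finprod_closed) (use sub_supp[of f] in auto)
      show "(finprod Q id \<circ> supp) (f \<otimes>\<^bsub>?Z\<^esub> g) = (finprod Q id \<circ> supp) f \<otimes>\<^bsub>Q\<^esub> (finprod Q id \<circ> supp) g"
        if "f \<in> carrier ?Z" "g \<in> carrier ?Z" for f g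
        using supp_mult[OF that] Q.finprod_symdiff_exponent_2[OF sq] sub_supp by simp
    qed
    show "bij_betw (finprod Q id \<circ> supp) (carrier ?Z) (carrier Q)"
      by (rule bij_betw_trans[OF bij_supp B(2)])
  qed
  then have "?Z \<cong> Q" unfolding is_iso_def by blast
  then have "Q \<cong> ?Z" using group.iso_sym[of ?Z Q] by simp
  then show ?thesis unfolding elementary_abelian_2_group_def by blast
qed

section \<open>Admissible characters and the group G(sigma)\<close>

definition char_tensor ::
  "('a \<Rightarrow> complex) \<Rightarrow> ('a \<Rightarrow> complex) \<Rightarrow> ('a \<Rightarrow> complex) \<Rightarrow> 'a \<times> 'a \<times> 'a \<Rightarrow> complex" where
  "char_tensor c1 c2 c3 \<tau> = c1 (fst \<tau>) * c2 (fst (snd \<tau>)) * c3 (snd (snd \<tau>))"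

lemma mem_G_sigma_iff:
  "\<tau> \<in> G_sigma G K1 K2 K3 S1 S2 S3 \<sigma>1 \<sigma>2 \<sigma>3 \<longleftrightarrow> \<tau> \<in> carrier (G \<times>\<times> G \<times>\<times> G) \<and>
     (\<forall>c1 c2 c3. admissible G K1 K2 K3 S1 S2 S3 c1 c2 c3 \<and>
        char_ne_one_at c1 \<sigma>1 \<and> char_ne_one_at c2 \<sigma>2 \<and> char_ne_one_at c3 \<sigma>3 \<longrightarrow> char_tensor c1 c2 c3 \<tau> = 1)"
  by (simp add: G_sigma_def char_tensor_def)

lemma character_char_tensor:
  assumes "character G c1" "character G c2" "character G c3"
  shows "character (G \<times>\<times> G \<times>\<times> G) (char_tensor c1 c2 c3)"
  using assms unfolding character_def char_tensor_def by (auto simp: ac_simps)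

context group
begin

lemma character_slices:
  assumes "character (G \<times>\<times> G \<times>\<times> G) x"
  shows "character G (\<lambda>g. x (g, \<one>, \<one>))" "character G (\<lambda>g. x (\<one>, g, \<one>))" "character G (\<lambda>g. x (\<one>, \<one>, g))"
proof -
  have "(\<lambda>g. (g, \<one>, \<one>)) \<in> hom G (G \<times>\<times> G \<times>\<times> G)" "(\<lambda>g. (\<one>, g, \<one>)) \<in> hom G (G \<times>\<times> G \<times>\<times> G)"
    "(\<lambda>g. (\<one>, \<one>, g)) \<in> hom G (G \<times>\<times> G \<times>\<times> G)"
    by (auto intro!: homI)
  then show "character G (\<lambda>g. x (g, \<one>, \<one>))" "character G (\<lambda>g. x (\<one>, g, \<one>))"
    "character G (\<lambda>g. x (\<one>, \<one>, g))"
    using character_comp_hom[OF assms] by (simp_all add: comp_def)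
qed

lemma character_eq_char_tensor_slices:
  assumes x: "character (G \<times>\<times> G \<times>\<times> G) x" and \<tau>: "\<tau> \<in> carrier (G \<times>\<times> G \<times>\<times> G)"
  shows "x \<tau> = char_tensor (\<lambda>g. x (g, \<one>, \<one>)) (\<lambda>g. x (\<one>, g, \<one>)) (\<lambda>g. x (\<one>, \<one>, g)) \<tau>"
proof -
  obtain u1 u2 u3 where \<tau>_eq: "\<tau> = (u1, u2, u3)" and u: "u1 \<in> carrier G" "u2 \<in> carrier G" "u3 \<in> carrier G"
    using \<tau> by auto
  have "x \<tau> = x (u1, u2, \<one>) * x (\<one>, \<one>, u3)"
    using character_mult[OF x, of "(u1, u2, \<one>)" "(\<one>, \<one>, u3)"] \<tau>_eq u by simp
  also have "x (u1, u2, \<one>) = x (u1, \<one>, \<one>) * x (\<one>, u2, \<one>)"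
    using character_mult[OF x, of "(u1, \<one>, \<one>)" "(\<one>, u2, \<one>)"] u by simp
  finally show ?thesis using \<tau>_eq by (simp add: char_tensor_def)
qed

end

lemma K_DeltaI:
  "k1 \<in> K1 \<Longrightarrow> k2 \<in> K2 \<Longrightarrow> k3 \<in> K3 \<Longrightarrow> g \<in> carrier G \<Longrightarrow>
    (k1 \<otimes>\<^bsub>G\<^esub> g, k2 \<otimes>\<^bsub>G\<^esub> g, k3 \<otimes>\<^bsub>G\<^esub> g) \<in> K_Delta G K1 K2 K3"
  unfolding K_Delta_def by blast

lemma K_DeltaE:
  assumes "\<tau> \<in> K_Delta G K1 K2 K3"
  obtains k1 k2 k3 g where "k1 \<in> K1" "k2 \<in> K2" "k3 \<in> K3" "g \<in> carrier G"
    "\<tau> = (k1 \<otimes>\<^bsub>G\<^esub> g, k2 \<otimes>\<^bsub>G\<^esub> g, k3 \<otimes>\<^bsub>G\<^esub> g)"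
  using assms unfolding K_Delta_def by blast

lemma admissible_characters:
  "admissible G K1 K2 K3 S1 S2 S3 c1 c2 c3 \<Longrightarrow> character G c1 \<and> character G c2 \<and> character G c3"
  unfolding admissible_def admissible1_def admissible2_def pre_admissible_def trivial_char_def by blast

lemma admissible_trivial_on_K:
  assumes "admissible G K1 K2 K3 S1 S2 S3 c1 c2 c3" "K1 \<subseteq> carrier G" "K2 \<subseteq> carrier G" "K3 \<subseteq> carrier G"
  shows "(\<forall>k\<in>K1. c1 k = 1) \<and> (\<forall>k\<in>K2. c2 k = 1) \<and> (\<forall>k\<in>K3. c3 k = 1)"
  using assms unfolding admissible_def admissible1_def admissible2_def pre_admissible_def trivial_char_def
  by blast

context comm_group
begin

lemma subgroup_K_Delta:
  assumes K: "subgroup K1 G" "subgroup K2 G" "subgroup K3 G"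
  shows "subgroup (K_Delta G K1 K2 K3) (G \<times>\<times> G \<times>\<times> G)"
proof (rule group.subgroupI)
  show "group (G \<times>\<times> G \<times>\<times> G)" by (intro DirProd_group is_group)
  show "K_Delta G K1 K2 K3 \<subseteq> carrier (G \<times>\<times> G \<times>\<times> G)"
    using K by (auto elim!: K_DeltaE intro: subgroup.mem_carrier)
  show "K_Delta G K1 K2 K3 \<noteq> {}" using K_DeltaI[of \<one> K1 \<one> K2 \<one> K3 \<one>] K by (auto intro: subgroup.one_closed)
next
  fix \<tau> assume "\<tau> \<in> K_Delta G K1 K2 K3"
  then obtain k1 k2 k3 g where k: "k1 \<in> K1" "k2 \<in> K2" "k3 \<in> K3" "g \<in> carrier G"
    and \<tau>: "\<tau> = (k1 \<otimes> g, k2 \<otimes> g, k3 \<otimes> g)" by (rule K_DeltaE)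
  have kc: "k1 \<in> carrier G" "k2 \<in> carrier G" "k3 \<in> carrier G" using k K subgroup.mem_carrier by metis+
  have "inv\<^bsub>G \<times>\<times> G \<times>\<times> G\<^esub> \<tau> = (inv (k1 \<otimes> g), inv (k2 \<otimes> g), inv (k3 \<otimes> g))"
    using \<tau> kc k(4) inv_DirProd[OF is_group DirProd_group[OF is_group is_group]] by simp
  also have "\<dots> = (inv k1 \<otimes> inv g, inv k2 \<otimes> inv g, inv k3 \<otimes> inv g)"
    using kc k(4) by (simp add: inv_mult m_comm)
  finally have "inv\<^bsub>G \<times>\<times> G \<times>\<times> G\<^esub> \<tau> = (inv k1 \<otimes> inv g, inv k2 \<otimes> inv g, inv k3 \<otimes> inv g)" .
  then show "inv\<^bsub>G \<times>\<times> G \<times>\<times> G\<^esub> \<tau> \<in> K_Delta G K1 K2 K3"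
    using K_DeltaI[OF subgroup.m_inv_closed[OF K(1) k(1)] subgroup.m_inv_closed[OF K(2) k(2)]
        subgroup.m_inv_closed[OF K(3) k(3)] inv_closed[OF k(4)]] by simp
next
  fix \<tau> \<tau>' assume "\<tau> \<in> K_Delta G K1 K2 K3" "\<tau>' \<in> K_Delta G K1 K2 K3"
  then obtain k1 k2 k3 g l1 l2 l3 h where k: "k1 \<in> K1" "k2 \<in> K2" "k3 \<in> K3" "g \<in> carrier G"
    and l: "l1 \<in> K1" "l2 \<in> K2" "l3 \<in> K3" "h \<in> carrier G"
    and \<tau>: "\<tau> = (k1 \<otimes> g, k2 \<otimes> g, k3 \<otimes> g)" "\<tau>' = (l1 \<otimes> h, l2 \<otimes> h, l3 \<otimes> h)"
    by (metis K_DeltaE)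
  have swap: "(a \<otimes> g) \<otimes> (b \<otimes> h) = (a \<otimes> b) \<otimes> (g \<otimes> h)" if "a \<in> carrier G" "b \<in> carrier G" for a b
    using that k(4) l(4) by (simp add: m_ac)
  have "\<tau> \<otimes>\<^bsub>G \<times>\<times> G \<times>\<times> G\<^esub> \<tau>' = ((k1 \<otimes> l1) \<otimes> (g \<otimes> h), (k2 \<otimes> l2) \<otimes> (g \<otimes> h), (k3 \<otimes> l3) \<otimes> (g \<otimes> h))"
    using \<tau> swap k l subgroup.mem_carrier[OF K(1)] subgroup.mem_carrier[OF K(2)] subgroup.mem_carrier[OF K(3)]
    by simp
  then show "\<tau> \<otimes>\<^bsub>G \<times>\<times> G \<times>\<times> G\<^esub> \<tau>' \<in> K_Delta G K1 K2 K3"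
    using K_DeltaI[OF subgroup.m_closed[OF K(1) k(1) l(1)] subgroup.m_closed[OF K(2) k(2) l(2)]
        subgroup.m_closed[OF K(3) k(3) l(3)] m_closed[OF k(4) l(4)]] by simp
qed

lemma triple_mem_K_Delta:
  "k1 \<in> K1 \<Longrightarrow> k2 \<in> K2 \<Longrightarrow> k3 \<in> K3 \<Longrightarrow> subgroup K1 G \<Longrightarrow> subgroup K2 G \<Longrightarrow> subgroup K3 G \<Longrightarrow>
    (k1, k2, k3) \<in> K_Delta G K1 K2 K3"
  using K_DeltaI[of k1 K1 k2 K2 k3 K3 \<one>] subgroup.mem_carrier by fastforce

lemma diagonal_mem_K_Delta:
  "g \<in> carrier G \<Longrightarrow> subgroup K1 G \<Longrightarrow> subgroup K2 G \<Longrightarrow> subgroup K3 G \<Longrightarrow> (g, g, g) \<in> K_Delta G K1 K2 K3"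
  using K_DeltaI[of \<one> K1 \<one> K2 \<one> K3 g] subgroup.one_closed by fastforce

lemma admissible_diagonal:
  assumes fin: "finite (carrier G)" and adm: "admissible G K1 K2 K3 S1 S2 S3 c1 c2 c3" and g: "g \<in> carrier G"
  shows "c1 g * c2 g * c3 g = 1"
proof -
  have ch: "character G c1" "character G c2" "character G c3" using admissible_characters[OF adm] by auto
  have inv: "cnj (c g) = inverse (c g)" "c g \<noteq> 0" if "character G c" for c
    using cnj_character[OF fin that g] that g unfolding character_def by auto
  consider "c3 g = cnj (c1 g * c2 g)" | "c1 g = 1" "c3 g = cnj (c2 g)" | "c2 g = 1" "c3 g = cnj (c1 g)"
    | "c3 g = 1" "c2 g = cnj (c1 g)"
    using adm g unfolding admissible_def admissible1_def admissible2_def trivial_char_def by blast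
  then show ?thesis using inv[OF ch(1)] inv[OF ch(2)] by cases (simp_all add: field_simps)
qed

lemma char_tensor_K_Delta:
  assumes fin: "finite (carrier G)" and K: "subgroup K1 G" "subgroup K2 G" "subgroup K3 G"
    and adm: "admissible G K1 K2 K3 S1 S2 S3 c1 c2 c3" and \<tau>: "\<tau> \<in> K_Delta G K1 K2 K3"
  shows "char_tensor c1 c2 c3 \<tau> = 1"
proof -
  obtain k1 k2 k3 g where k: "k1 \<in> K1" "k2 \<in> K2" "k3 \<in> K3" "g \<in> carrier G"
    and \<tau>_eq: "\<tau> = (k1 \<otimes> g, k2 \<otimes> g, k3 \<otimes> g)" using \<tau> by (rule K_DeltaE)
  have kc: "k1 \<in> carrier G" "k2 \<in> carrier G" "k3 \<in> carrier G" using k K subgroup.mem_carrier by metis+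
  have ch: "character G c1" "character G c2" "character G c3" using admissible_characters[OF adm] by auto
  have "c1 k1 = 1" "c2 k2 = 1" "c3 k3 = 1"
    using admissible_trivial_on_K[OF adm subgroup.subset[OF K(1)] subgroup.subset[OF K(2)] subgroup.subset[OF K(3)]] k
    by auto
  then show ?thesis
    using \<tau>_eq admissible_diagonal[OF fin adm k(4)] character_mult[OF ch(1) kc(1) k(4)]
      character_mult[OF ch(2) kc(2) k(4)] character_mult[OF ch(3) kc(3) k(4)]
    by (simp add: char_tensor_def)
qed

lemma subgroup_G_sigma:
  assumes fin: "finite (carrier G)"
  shows "subgroup (G_sigma G K1 K2 K3 S1 S2 S3 \<sigma>1 \<sigma>2 \<sigma>3) (G \<times>\<times> G \<times>\<times> G)"
proof -
  interpret P: group "G \<times>\<times> G \<times>\<times> G" by (intro DirProd_group is_group)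
  let ?Q = "\<lambda>\<psi>. \<exists>c1 c2 c3. \<psi> = char_tensor c1 c2 c3 \<and> admissible G K1 K2 K3 S1 S2 S3 c1 c2 c3 \<and>
    char_ne_one_at c1 \<sigma>1 \<and> char_ne_one_at c2 \<sigma>2 \<and> char_ne_one_at c3 \<sigma>3"
  have "G_sigma G K1 K2 K3 S1 S2 S3 \<sigma>1 \<sigma>2 \<sigma>3 = {\<tau> \<in> carrier (G \<times>\<times> G \<times>\<times> G). \<forall>\<psi>. ?Q \<psi> \<longrightarrow> \<psi> \<tau> = 1}"
  proof
    show "{\<tau> \<in> carrier (G \<times>\<times> G \<times>\<times> G). \<forall>\<psi>. ?Q \<psi> \<longrightarrow> \<psi> \<tau> = 1} \<subseteq> G_sigma G K1 K2 K3 S1 S2 S3 \<sigma>1 \<sigma>2 \<sigma>3"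
    proof
      fix \<tau> assume "\<tau> \<in> {\<tau> \<in> carrier (G \<times>\<times> G \<times>\<times> G). \<forall>\<psi>. ?Q \<psi> \<longrightarrow> \<psi> \<tau> = 1}"
      then have "\<tau> \<in> carrier (G \<times>\<times> G \<times>\<times> G)" "\<And>\<psi>. ?Q \<psi> \<Longrightarrow> \<psi> \<tau> = 1" by auto
      then show "\<tau> \<in> G_sigma G K1 K2 K3 S1 S2 S3 \<sigma>1 \<sigma>2 \<sigma>3" unfolding mem_G_sigma_iff by blast
    qed
  qed (auto simp: mem_G_sigma_iff)
  moreover have "subgroup {\<tau> \<in> carrier (G \<times>\<times> G \<times>\<times> G). \<forall>\<psi>. ?Q \<psi> \<longrightarrow> \<psi> \<tau> = 1} (G \<times>\<times> G \<times>\<times> G)"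
    by (rule P.subgroup_kernel_characters) (use admissible_characters character_char_tensor in blast)
  ultimately show ?thesis by simp
qed

lemma K_Delta_subset_G_sigma:
  assumes fin: "finite (carrier G)" and K: "subgroup K1 G" "subgroup K2 G" "subgroup K3 G"
  shows "K_Delta G K1 K2 K3 \<subseteq> G_sigma G K1 K2 K3 S1 S2 S3 \<sigma>1 \<sigma>2 \<sigma>3"
  using char_tensor_K_Delta[OF fin K] subgroup.subset[OF subgroup_K_Delta[OF K]]
  by (auto simp: mem_G_sigma_iff)

end

section \<open>Squares in G(sigma)\<close>

context comm_group
begin

lemma curve_action_data_mult_pow:
  assumes K: "subgroup K G" and S: "curve_action_data G K S" and s: "s \<in> S" and k: "k \<in> K"
  shows "k \<otimes> s [^] (p::nat) \<in> S"
proof -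
  obtain cs where cs: "set cs \<subseteq> carrier (G Mod K)"
    and S_eq: "S = {g \<in> carrier G. \<exists>c\<in>set cs. K #> g \<in> generate (G Mod K) {c}}"
    using S unfolding curve_action_data_def by blast
  interpret N: normal K G using subgroup_imp_normal[OF K] .
  interpret Q: group "G Mod K" by (rule N.factorgroup_is_group)
  obtain c where c: "c \<in> set cs" "K #> s \<in> generate (G Mod K) {c}" and sc: "s \<in> carrier G"
    using s S_eq by auto
  have kc: "k \<in> carrier G" using subgroup.mem_carrier[OF K k] .
  have "K #> (k \<otimes> s [^] p) = (K #> s) [^]\<^bsub>G Mod K\<^esub> p"
    using coset_mult_assoc[of K k "s [^] p"] coset_join2[OF kc K k] N.FactGroup_pow[OF sc] sc kc
      subgroup.subset[OF K] by simp
  also have "\<dots> \<in> generate (G Mod K) {c}"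
    using Q.subgroup_nat_pow_closed[OF Q.generate_is_subgroup c(2)] c(1) cs by blast
  finally show ?thesis using S_eq c(1) kc sc by auto
qed

lemma pow_triple_mem_K_Delta:
  assumes K: "subgroup K1 G" "subgroup K2 G" "subgroup K3 G"
    and S: "curve_action_data G K1 S1" "curve_action_data G K2 S2" "curve_action_data G K3 S3"
    and free: "S1 \<inter> S2 \<inter> S3 = {\<one>}" and s: "s1 \<in> S1" "s2 \<in> S2" "s3 \<in> S3"
    and mem: "(s1 [^] (p::nat), s2 [^] (q::nat), s3 [^] (r::nat)) \<in> K_Delta G K1 K2 K3"
  shows "s1 [^] p \<in> K1 \<and> s2 [^] q \<in> K2 \<and> s3 [^] r \<in> K3"
proof -
  obtain k1 k2 k3 g where k: "k1 \<in> K1" "k2 \<in> K2" "k3 \<in> K3" "g \<in> carrier G"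
    and eq: "s1 [^] p = k1 \<otimes> g" "s2 [^] q = k2 \<otimes> g" "s3 [^] r = k3 \<otimes> g"
    using mem by (auto elim!: K_DeltaE)
  have kc: "k1 \<in> carrier G" "k2 \<in> carrier G" "k3 \<in> carrier G"
    using k subgroup.mem_carrier K by metis+
  have g: "g = inv k1 \<otimes> s1 [^] p" "g = inv k2 \<otimes> s2 [^] q" "g = inv k3 \<otimes> s3 [^] r"
    using eq kc k(4) by (simp_all add: inv_solve_left)
  have "g \<in> S1" unfolding g(1)
    by (rule curve_action_data_mult_pow[OF K(1) S(1) s(1) subgroup.m_inv_closed[OF K(1) k(1)]])
  moreover have "g \<in> S2" unfolding g(2)
    by (rule curve_action_data_mult_pow[OF K(2) S(2) s(2) subgroup.m_inv_closed[OF K(2) k(2)]])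
  moreover have "g \<in> S3" unfolding g(3)
    by (rule curve_action_data_mult_pow[OF K(3) S(3) s(3) subgroup.m_inv_closed[OF K(3) k(3)]])
  ultimately have "g = \<one>" using free by blast
  then show ?thesis using eq k kc by simp
qed

lemma independent_mod_K_Delta:
  assumes K: "subgroup K1 G" "subgroup K2 G" "subgroup K3 G"
    and S: "curve_action_data G K1 S1" "curve_action_data G K2 S2" "curve_action_data G K3 S3"
    and free: "S1 \<inter> S2 \<inter> S3 = {\<one>}" and s: "s1 \<in> S1" "s2 \<in> S2" "s3 \<in> S3"
    and sc: "s1 \<in> carrier G" "s2 \<in> carrier G" "s3 \<in> carrier G"
  shows "independent_mod (G \<times>\<times> G \<times>\<times> G) (K_Delta G K1 K2 K3) (s1, \<one>, \<one>) (\<one>, s2, \<one>) (\<one>, \<one>, s3)"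
  unfolding independent_mod_def
proof (intro allI impI)
  fix p q r :: nat
  assume "(s1, \<one>, \<one>) [^]\<^bsub>G \<times>\<times> G \<times>\<times> G\<^esub> p \<otimes>\<^bsub>G \<times>\<times> G \<times>\<times> G\<^esub> (\<one>, s2, \<one>) [^]\<^bsub>G \<times>\<times> G \<times>\<times> G\<^esub> q
      \<otimes>\<^bsub>G \<times>\<times> G \<times>\<times> G\<^esub> (\<one>, \<one>, s3) [^]\<^bsub>G \<times>\<times> G \<times>\<times> G\<^esub> r \<in> K_Delta G K1 K2 K3"
  then have "(s1 [^] p, s2 [^] q, s3 [^] r) \<in> K_Delta G K1 K2 K3" using sc by (simp add: nat_pow_DirProd)
  from pow_triple_mem_K_Delta[OF K S free s this]
  show "(s1, \<one>, \<one>) [^]\<^bsub>G \<times>\<times> G \<times>\<times> G\<^esub> p \<in> K_Delta G K1 K2 K3 \<and>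
      (\<one>, s2, \<one>) [^]\<^bsub>G \<times>\<times> G \<times>\<times> G\<^esub> q \<in> K_Delta G K1 K2 K3 \<and>
      (\<one>, \<one>, s3) [^]\<^bsub>G \<times>\<times> G \<times>\<times> G\<^esub> r \<in> K_Delta G K1 K2 K3"
    using triple_mem_K_Delta[OF _ _ _ K] subgroup.one_closed[OF K(1)] subgroup.one_closed[OF K(2)]
      subgroup.one_closed[OF K(3)] sc by (simp add: nat_pow_DirProd)
qed

lemma coset_representative:
  assumes K: "subgroup K G" and \<sigma>: "\<sigma> \<in> carrier (G Mod K)" "\<sigma> \<noteq> \<one>\<^bsub>G Mod K\<^esub>" "\<sigma> \<subseteq> S"
  obtains s where "s \<in> carrier G" "\<sigma> = K #> s" "s \<in> S" "s \<notin> K"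
proof -
  obtain s where s: "s \<in> carrier G" "\<sigma> = K #> s" using \<sigma>(1) unfolding FactGroup_def RCOSETS_def by auto
  moreover have "s \<in> S" using rcos_self[OF s(1) K] s(2) \<sigma>(3) by blast
  moreover have "s \<notin> K" using coset_join2[OF s(1) K] s(2) \<sigma>(2) by auto
  ultimately show thesis using that by blast
qed

lemma char_ne_one_at_coset:
  assumes "character G c" "\<forall>k\<in>K. c k = 1" "K \<subseteq> carrier G" "s \<in> carrier G" "c s \<noteq> 1"
  shows "char_ne_one_at c (K #> s)"
  using assms character_mult[OF assms(1)] unfolding char_ne_one_at_def r_coset_def by auto

lemma admissible_slices:
  assumes fin: "finite (carrier G)" and K: "subgroup K1 G" "subgroup K2 G" "subgroup K3 G"
    and x: "character (G \<times>\<times> G \<times>\<times> G) x" "\<forall>d\<in>K_Delta G K1 K2 K3. x d = 1"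
    and s: "s1 \<in> S1" "s2 \<in> S2" "s3 \<in> S3"
    and ne: "x (s1, \<one>, \<one>) \<noteq> 1" "x (\<one>, s2, \<one>) \<noteq> 1" "x (\<one>, \<one>, s3) \<noteq> 1"
  shows "admissible G K1 K2 K3 S1 S2 S3 (\<lambda>g. x (g, \<one>, \<one>)) (\<lambda>g. x (\<one>, g, \<one>)) (\<lambda>g. x (\<one>, \<one>, g))"
proof -
  note ch = character_slices[OF x(1)]
  have o: "\<one> \<in> K1" "\<one> \<in> K2" "\<one> \<in> K3" using K by (simp_all add: subgroup.one_closed)
  have "x (k, \<one>, \<one>) = 1" if "k \<in> K1" for k using x(2) triple_mem_K_Delta[OF that o(2,3) K] by blast
  moreover have "x (\<one>, k, \<one>) = 1" if "k \<in> K2" for k using x(2) triple_mem_K_Delta[OF o(1) that o(3) K] by blast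
  moreover have "x (\<one>, \<one>, k) = 1" if "k \<in> K3" for k using x(2) triple_mem_K_Delta[OF o(1,2) that K] by blast
  moreover have "x (\<one>, \<one>, g) = cnj (x (g, \<one>, \<one>) * x (\<one>, g, \<one>))" if g: "g \<in> carrier G" for g
  proof -
    have "x (g, \<one>, \<one>) * x (\<one>, g, \<one>) * x (\<one>, \<one>, g) = 1"
      using x(2) diagonal_mem_K_Delta[OF g K] character_eq_char_tensor_slices[OF x(1), of "(g, g, g)"] g
      by (simp add: char_tensor_def)
    then have "x (\<one>, \<one>, g) = inverse (x (g, \<one>, \<one>) * x (\<one>, g, \<one>))" by (rule inverse_unique[symmetric])
    then show ?thesis using cnj_character[OF fin ch(1) g] cnj_character[OF fin ch(2) g] by simp
  qed
  ultimately show ?thesis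
    using ch s ne unfolding admissible_def admissible1_def pre_admissible_def by blast
qed

lemma character_eq_1_on_G_sigma:
  assumes fin: "finite (carrier G)" and K: "subgroup K1 G" "subgroup K2 G" "subgroup K3 G"
    and x: "character (G \<times>\<times> G \<times>\<times> G) x" "\<forall>d\<in>K_Delta G K1 K2 K3. x d = 1"
    and s: "s1 \<in> carrier G" "s2 \<in> carrier G" "s3 \<in> carrier G" "s1 \<in> S1" "s2 \<in> S2" "s3 \<in> S3"
    and \<sigma>: "\<sigma>1 = K1 #> s1" "\<sigma>2 = K2 #> s2" "\<sigma>3 = K3 #> s3"
    and ne: "x (s1, \<one>, \<one>) \<noteq> 1" "x (\<one>, s2, \<one>) \<noteq> 1" "x (\<one>, \<one>, s3) \<noteq> 1"
    and \<tau>: "\<tau> \<in> G_sigma G K1 K2 K3 S1 S2 S3 \<sigma>1 \<sigma>2 \<sigma>3"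
  shows "x \<tau> = 1"
proof -
  let ?c1 = "\<lambda>g. x (g, \<one>, \<one>)" and ?c2 = "\<lambda>g. x (\<one>, g, \<one>)" and ?c3 = "\<lambda>g. x (\<one>, \<one>, g)"
  have adm: "admissible G K1 K2 K3 S1 S2 S3 ?c1 ?c2 ?c3"
    by (rule admissible_slices[OF fin K x s(4-6) ne])
  note triv = admissible_trivial_on_K[OF adm subgroup.subset[OF K(1)] subgroup.subset[OF K(2)] subgroup.subset[OF K(3)]]
  have "char_ne_one_at ?c1 \<sigma>1" "char_ne_one_at ?c2 \<sigma>2" "char_ne_one_at ?c3 \<sigma>3"
    unfolding \<sigma> using triv ne
    by (auto intro!: char_ne_one_at_coset character_slices[OF x(1)] subgroup.subset K s(1-3))
  with adm have "char_tensor ?c1 ?c2 ?c3 \<tau> = 1" using \<tau> by (simp add: mem_G_sigma_iff)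
  then show ?thesis using character_eq_char_tensor_slices[OF x(1)] \<tau> by (simp add: mem_G_sigma_iff)
qed

lemma square_mem_K_Delta:
  assumes fin: "finite (carrier G)" and K: "subgroup K1 G" "subgroup K2 G" "subgroup K3 G"
    and S: "curve_action_data G K1 S1" "curve_action_data G K2 S2" "curve_action_data G K3 S3"
    and free: "S1 \<inter> S2 \<inter> S3 = {\<one>}"
    and \<sigma>1: "\<sigma>1 \<in> carrier (G Mod K1)" "\<sigma>1 \<noteq> \<one>\<^bsub>G Mod K1\<^esub>" "\<sigma>1 \<subseteq> S1"
    and \<sigma>2: "\<sigma>2 \<in> carrier (G Mod K2)" "\<sigma>2 \<noteq> \<one>\<^bsub>G Mod K2\<^esub>" "\<sigma>2 \<subseteq> S2"
    and \<sigma>3: "\<sigma>3 \<in> carrier (G Mod K3)" "\<sigma>3 \<noteq> \<one>\<^bsub>G Mod K3\<^esub>" "\<sigma>3 \<subseteq> S3"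
    and \<tau>: "\<tau> \<in> G_sigma G K1 K2 K3 S1 S2 S3 \<sigma>1 \<sigma>2 \<sigma>3"
  shows "\<tau> \<otimes>\<^bsub>G \<times>\<times> G \<times>\<times> G\<^esub> \<tau> \<in> K_Delta G K1 K2 K3"
proof (rule ccontr)
  assume \<tau>\<tau>: "\<tau> \<otimes>\<^bsub>G \<times>\<times> G \<times>\<times> G\<^esub> \<tau> \<notin> K_Delta G K1 K2 K3"
  let ?P = "G \<times>\<times> G \<times>\<times> G"
  interpret P: comm_group ?P by (intro comm_group_DirProd comm_group_axioms)
  obtain s1 where s1: "s1 \<in> carrier G" "\<sigma>1 = K1 #> s1" "s1 \<in> S1" "s1 \<notin> K1"
    using coset_representative[OF K(1) \<sigma>1] .
  obtain s2 where s2: "s2 \<in> carrier G" "\<sigma>2 = K2 #> s2" "s2 \<in> S2" "s2 \<notin> K2"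
    using coset_representative[OF K(2) \<sigma>2] .
  obtain s3 where s3: "s3 \<in> carrier G" "\<sigma>3 = K3 #> s3" "s3 \<in> S3" "s3 \<notin> K3"
    using coset_representative[OF K(3) \<sigma>3] .
  have not_in: "(s1, \<one>, \<one>) \<notin> K_Delta G K1 K2 K3" "(\<one>, s2, \<one>) \<notin> K_Delta G K1 K2 K3"
    "(\<one>, \<one>, s3) \<notin> K_Delta G K1 K2 K3"
    using pow_triple_mem_K_Delta[OF K S free s1(3) s2(3) s3(3), of 1 0 0]
      pow_triple_mem_K_Delta[OF K S free s1(3) s2(3) s3(3), of 0 1 0]
      pow_triple_mem_K_Delta[OF K S free s1(3) s2(3) s3(3), of 0 0 1] s1 s2 s3 by auto
  have "finite (carrier ?P)" "\<tau> \<in> carrier ?P" using fin \<tau> by (simp_all add: mem_G_sigma_iff)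
  moreover have "(s1, \<one>, \<one>) \<in> carrier ?P" "(\<one>, s2, \<one>) \<in> carrier ?P" "(\<one>, \<one>, s3) \<in> carrier ?P"
    using s1 s2 s3 by simp_all
  ultimately obtain x where x: "character ?P x" "\<forall>d\<in>K_Delta G K1 K2 K3. x d = 1"
    and ne: "x (s1, \<one>, \<one>) \<noteq> 1" "x (\<one>, s2, \<one>) \<noteq> 1" "x (\<one>, \<one>, s3) \<noteq> 1" and "x \<tau> \<noteq> 1"
    using P.separating_character[OF _ subgroup_K_Delta[OF K]
        independent_mod_K_Delta[OF K S free s1(3) s2(3) s3(3) s1(1) s2(1) s3(1)] _ _ _ not_in _ \<tau>\<tau>]
    by blast
  moreover have "x \<tau> = 1"
    by (rule character_eq_1_on_G_sigma[OF fin K x s1(1) s2(1) s3(1) s1(3) s2(3) s3(3) s1(2) s2(2) s3(2) ne \<tau>])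
  ultimately show False by simp
qed

end

theorem proposition4p11:
  fixes G :: "('a, 'b) monoid_scheme"
    and K1 K2 K3 S1 S2 S3 :: "'a set"
    and \<sigma>1 \<sigma>2 \<sigma>3 :: "'a set"
  assumes "comm_group G" and "finite (carrier G)"
    and "subgroup K1 G" and "subgroup K2 G" and "subgroup K3 G"
    and "cyclic_group (G\<lparr>carrier := K1\<rparr>)" and "cyclic_group (G\<lparr>carrier := K2\<rparr>)"
    and "cyclic_group (G\<lparr>carrier := K3\<rparr>)"
    and "K1 \<inter> K2 = {\<one>\<^bsub>G\<^esub>}" and "K1 \<inter> K3 = {\<one>\<^bsub>G\<^esub>}" and "K2 \<inter> K3 = {\<one>\<^bsub>G\<^esub>}"
    and "curve_action_data G K1 S1" and "curve_action_data G K2 S2"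
    and "curve_action_data G K3 S3"
    and "S1 \<inter> S2 \<inter> S3 = {\<one>\<^bsub>G\<^esub>}"
    and "\<sigma>1 \<in> carrier (G Mod K1)" and "\<sigma>1 \<noteq> \<one>\<^bsub>G Mod K1\<^esub>" and "\<sigma>1 \<subseteq> S1"
    and "\<sigma>2 \<in> carrier (G Mod K2)" and "\<sigma>2 \<noteq> \<one>\<^bsub>G Mod K2\<^esub>" and "\<sigma>2 \<subseteq> S2"
    and "\<sigma>3 \<in> carrier (G Mod K3)" and "\<sigma>3 \<noteq> \<one>\<^bsub>G Mod K3\<^esub>" and "\<sigma>3 \<subseteq> S3"
  shows "trivial_group
           (((G \<times>\<times> G \<times>\<times> G)\<lparr>carrier := G_sigma G K1 K2 K3 S1 S2 S3 \<sigma>1 \<sigma>2 \<sigma>3\<rparr>) Mod K_Delta G K1 K2 K3)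
       \<or> elementary_abelian_2_group
           (((G \<times>\<times> G \<times>\<times> G)\<lparr>carrier := G_sigma G K1 K2 K3 S1 S2 S3 \<sigma>1 \<sigma>2 \<sigma>3\<rparr>) Mod K_Delta G K1 K2 K3)"
proof -
  interpret G: comm_group G by fact
  let ?P = "G \<times>\<times> G \<times>\<times> G"
  let ?GS = "G_sigma G K1 K2 K3 S1 S2 S3 \<sigma>1 \<sigma>2 \<sigma>3"
  let ?H = "?P\<lparr>carrier := ?GS\<rparr>"
  let ?KD = "K_Delta G K1 K2 K3"
  have fin: "finite (carrier G)" and K: "subgroup K1 G" "subgroup K2 G" "subgroup K3 G" by fact+
  have GS: "subgroup ?GS ?P" by (rule G.subgroup_G_sigma[OF fin])
  have H: "comm_group ?H" by (intro comm_group_subgroup comm_group_DirProd GS G.comm_group_axioms)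
  have KD: "subgroup ?KD ?H"
    using group.subgroup_incl[OF _ G.subgroup_K_Delta[OF K] GS G.K_Delta_subset_G_sigma[OF fin K]]
    by (simp add: DirProd_group G.is_group)
  have "finite ?GS" using subgroup.subset[OF GS] fin by (simp add: finite_subset)
  then have "finite (carrier (?H Mod ?KD))" by (simp add: FactGroup_def RCOSETS_def)
  moreover have "Z \<otimes>\<^bsub>?H Mod ?KD\<^esub> Z = \<one>\<^bsub>?H Mod ?KD\<^esub>" if "Z \<in> carrier (?H Mod ?KD)" for Z
    using comm_group.FactGroup_square_eq_one[OF H KD _ that] G.square_mem_K_Delta[OF fin K assms(12-24)]
    by simp
  ultimately have "elementary_abelian_2_group (?H Mod ?KD)"
    by (intro exponent_2_imp_elementary_abelian_2_group comm_group.abelian_FactGroup[OF H KD])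
  then show ?thesis by blast
qed

end
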